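(* Let $r\geq 3$ and let $D$ be an $m$-colored semicomplete $r$-partite digraph such that every directed $4$-cycle $\overrightarrow{C}_4$ contained in $D$ (as a subdigraph) is at most $2$-colored. Let $x,y$ be distinct vertices of $D$. If there exists a directed path from $x$ to $y$ using exactly $3$ colors and there is no directed path from $y$ to $x$ using at most $3$ colors, then $d(x,y)\leq 2$.
   Context: A semicomplete $r$-partite digraph ($r\ge 2$) is a digraph whose vertex set is partitioned into $r$ nonempty independent sets (partite sets) such that for any two vertices $u,v$ in different partite sets at least one of the arcs $(u,v)$, $(v,u)$ is present (both may be present); there are no arcs inside a partite set. An $m$-colored digraph is a digraph whose arcs are each assigned one of $m$ colors. A directed path (no repeated vertices) is $j$-colored if its arcs use exactly $j$ distinct colors; it uses at most $k$ colors if it is $j$-colored for some $1\le j\le k$. A subdigraph is at most $k$-colored if its arcs use at most $k$ colors. $\overrightarrow{C}_n$ is the directed cycle of length $n$. $d(x,y)$ denotes the minimum number of arcs of a directed path from $x$ to $y$. *)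

theory Defs
  imports Main
begin

definition semicomplete_multipartite ::
  "'a set \<Rightarrow> ('a \<times> 'a) set \<Rightarrow> nat \<Rightarrow> ('a \<Rightarrow> nat) \<Rightarrow> bool" where
  "semicomplete_multipartite V A r part \<longleftrightarrow>
     finite V \<and> r \<ge> 2 \<and>
     A \<subseteq> V \<times> V \<and>
     (\<forall>v\<in>V. part v < r) \<and>
     (\<forall>i<r. \<exists>v\<in>V. part v = i) \<and>
     (\<forall>(u,v)\<in>A. part u \<noteq> part v) \<and>
     (\<forall>u\<in>V. \<forall>v\<in>V. part u \<noteq> part v \<longrightarrow> (u,v) \<in> A \<or> (v,u) \<in> A)"

definition m_colored :: "('a \<times> 'a) set \<Rightarrow> nat \<Rightarrow> ('a \<times> 'a \<Rightarrow> nat) \<Rightarrow> bool" where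
  "m_colored A m col \<longleftrightarrow> (\<forall>e\<in>A. col e < m)"

definition arcs_of :: "'a list \<Rightarrow> ('a \<times> 'a) set" where
  "arcs_of p = set (zip p (tl p))"

definition dpath :: "('a \<times> 'a) set \<Rightarrow> 'a list \<Rightarrow> 'a \<Rightarrow> 'a \<Rightarrow> bool" where
  "dpath A p x y \<longleftrightarrow> p \<noteq> [] \<and> hd p = x \<and> last p = y \<and> distinct p \<and> arcs_of p \<subseteq> A"

definition num_colors :: "('a \<times> 'a \<Rightarrow> nat) \<Rightarrow> 'a list \<Rightarrow> nat" where
  "num_colors col p = card (col ` arcs_of p)"

definition ddist :: "('a \<times> 'a) set \<Rightarrow> 'a \<Rightarrow> 'a \<Rightarrow> nat" where
  "ddist A x y = (LEAST n. \<exists>p. dpath A p x y \<and> length p = Suc n)"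

definition C4_at_most_2_colored :: "('a \<times> 'a) set \<Rightarrow> ('a \<times> 'a \<Rightarrow> nat) \<Rightarrow> bool" where
  "C4_at_most_2_colored A col \<longleftrightarrow>
     (\<forall>a b c d. distinct [a,b,c,d] \<and> (a,b) \<in> A \<and> (b,c) \<in> A \<and> (c,d) \<in> A \<and> (d,a) \<in> A
        \<longrightarrow> card (col ` {(a,b),(b,c),(c,d),(d,a)}) \<le> 2)"

end

theory Submission
  imports Defs
begin

text \<open>
  Assume there is no directed y-x path with at most 3 colours.  Then no y-x
  path with one, two or three arcs exists at all.  If some vertex z gives a 2-path
  x \<rightarrow> z \<rightarrow> y we are done; if x and y lie in different partite sets, the arc between
  them must be x \<rightarrow> y.  The remaining case, x and y in the same partite set with no
  2-path from x to y, is contradictory: every vertex z outside that partite set is then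
  either an in-neighbour of both x and y, or an out-neighbour of both.  Walking along the
  given x-y path, let w be the first vertex that is an in-neighbour of x, and u its
  predecessor.  If u lies outside the partite set of x, then y \<rightarrow> u \<rightarrow> w \<rightarrow> x is a y-x path
  of three arcs; otherwise the predecessor t of u gives the 4-cycle x \<rightarrow> t \<rightarrow> u \<rightarrow> w \<rightarrow> x,
  which has at most 2 colours, so y \<rightarrow> t \<rightarrow> u \<rightarrow> w \<rightarrow> x is a y-x path with at most 3 colours.
\<close>

lemma dpath_arc:
  assumes "dpath A p x y" "Suc i < length p"
  shows "(p!i, p!Suc i) \<in> A"
proof -
  have "(p!i, p!Suc i) \<in> set (zip p (tl p))"
    using assms(2) by (auto simp: set_zip nth_tl intro!: exI[of _ i])
  thus ?thesis using assms(1) by (auto simp: dpath_def arcs_of_def)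
qed

lemma num_colors_le_arcs: "num_colors col p \<le> length p - 1"
proof -
  have "num_colors col p \<le> card (set (zip p (tl p)))"
    unfolding num_colors_def arcs_of_def by (rule card_image_le) simp
  also have "\<dots> \<le> length (zip p (tl p))" by (rule card_length)
  finally show ?thesis by simp
qed

lemma num_colors_pos:
  assumes "2 \<le> length p"
  shows "1 \<le> num_colors col p"
proof -
  obtain a b t where "p = a # b # t"
    using assms by (cases p; cases "tl p") auto
  hence "arcs_of p \<noteq> {}" by (simp add: arcs_of_def)
  thus ?thesis by (simp add: num_colors_def arcs_of_def Suc_le_eq card_gt_0_iff)
qed

lemma ddist_le_path:
  assumes "dpath A p x y"
  shows "ddist A x y \<le> length p - 1"
proof -
  have "length p = Suc (length p - 1)" using assms by (simp add: dpath_def)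
  hence "\<exists>q. dpath A q x y \<and> length q = Suc (length p - 1)" using assms by blast
  thus ?thesis unfolding ddist_def by (rule Least_le)
qed

locale no_cheap_return =
  fixes V :: "'a set" and A :: "('a \<times> 'a) set" and r :: nat
    and part :: "'a \<Rightarrow> nat" and col :: "'a \<times> 'a \<Rightarrow> nat" and x y :: 'a
  assumes multipartite: "semicomplete_multipartite V A r part"
    and C4_colors: "C4_at_most_2_colored A col"
    and x_in: "x \<in> V" and y_in: "y \<in> V" and x_ne_y: "x \<noteq> y"
    and no_return: "\<not> (\<exists>q. dpath A q y x \<and> 1 \<le> num_colors col q \<and> num_colors col q \<le> 3)"
begin

lemma arc_parts: "(u, v) \<in> A \<Longrightarrow> part u \<noteq> part v"
  using multipartite by (auto simp: semicomplete_multipartite_def)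

lemma arc_exists:
  "u \<in> V \<Longrightarrow> v \<in> V \<Longrightarrow> part u \<noteq> part v \<Longrightarrow> (u, v) \<in> A \<or> (v, u) \<in> A"
  using multipartite by (auto simp: semicomplete_multipartite_def)

text \<open>A y-x path with at most three arcs has at most three colours, so none exists.\<close>
lemma no_short_return:
  assumes "dpath A q y x" "length q \<le> 4"
  shows False
proof -
  have "2 \<le> length q"
    using assms(1) x_ne_y by (cases q; cases "tl q") (auto simp: dpath_def)
  thus False
    using no_return assms num_colors_le_arcs[of col q] num_colors_pos[of q col] by force
qed

lemma no_arc_y_x: "(y, x) \<notin> A"
  using no_short_return[of "[y, x]"] x_ne_y by (auto simp: dpath_def arcs_of_def)

lemma no_2path_y_x: "(y, z) \<in> A \<Longrightarrow> (z, x) \<notin> A"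
  using no_short_return[of "[y, z, x]"] x_ne_y arc_parts
  by (fastforce simp: dpath_def arcs_of_def)

end

text \<open>The contradictory case: x and y in the same partite set and no 2-path from x to y.\<close>
locale same_part_no_2path = no_cheap_return +
  assumes same_part: "part x = part y"
    and no_2path_x_y: "\<not> (\<exists>z. (x, z) \<in> A \<and> (z, y) \<in> A)"
begin

lemma in_neighbour:
  assumes "z \<in> V" "part z \<noteq> part x" "(z, x) \<in> A"
  shows "(z, y) \<in> A \<and> (x, z) \<notin> A"
  using assms arc_exists[OF y_in \<open>z \<in> V\<close>] same_part no_2path_y_x no_2path_x_y by metis

lemma out_neighbour:
  assumes "z \<in> V" "part z \<noteq> part x" "(z, x) \<notin> A"
  shows "(y, z) \<in> A \<and> (x, z) \<in> A"
  using assms arc_exists[OF y_in \<open>z \<in> V\<close>] arc_exists[OF x_in \<open>z \<in> V\<close>] same_part no_2path_x_y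
  by metis

lemma no_return_via_3:
  assumes "(u, w) \<in> A" "(w, x) \<in> A" "u \<in> V" "part u \<noteq> part x" "(u, x) \<notin> A"
    and "part w \<noteq> part x"
  shows False
proof -
  have "(y, u) \<in> A" using out_neighbour assms by blast
  moreover have "u \<noteq> w" using arc_parts assms(1) by blast
  ultimately have "dpath A [y, u, w, x] y x"
    using assms x_ne_y same_part by (auto simp: dpath_def arcs_of_def)
  thus False using no_short_return by force
qed

text \<open>If instead u lies in the partite set of x and t \<rightarrow> u with t a non-neighbour of x,
  the 4-cycle x \<rightarrow> t \<rightarrow> u \<rightarrow> w \<rightarrow> x has at most 2 colours; adding the arc y \<rightarrow> t turns it into
  the y-x path y \<rightarrow> t \<rightarrow> u \<rightarrow> w \<rightarrow> x with at most 3 colours.\<close>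
lemma no_return_via_4:
  assumes "(t, u) \<in> A" "(u, w) \<in> A" "(w, x) \<in> A" "t \<in> V" "w \<in> V"
    and "part t \<noteq> part x" "(t, x) \<notin> A" "part w \<noteq> part x"
  shows False
proof -
  have yt: "(y, t) \<in> A" and xt: "(x, t) \<in> A" using out_neighbour assms by blast+
  have "(x, w) \<notin> A" using in_neighbour assms by blast
  hence "u \<noteq> x" using assms(2) by blast
  have "u \<noteq> y"
    using no_short_return[of "[y, w, x]"] assms(2,3,8) x_ne_y same_part
    by (auto simp: dpath_def arcs_of_def)
  have "t \<noteq> u" "u \<noteq> w" using arc_parts assms(1,2) by blast+
  have "t \<noteq> w" using assms(3,7) by blast
  have "x \<noteq> t" "x \<noteq> w" using assms(6,8) by blast+
  note distinct = \<open>u \<noteq> x\<close> \<open>u \<noteq> y\<close> \<open>t \<noteq> u\<close> \<open>u \<noteq> w\<close> \<open>t \<noteq> w\<close>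
    \<open>x \<noteq> t\<close> \<open>x \<noteq> w\<close>
  have C4: "card (col ` {(x, t), (t, u), (u, w), (w, x)}) \<le> 2"
    using C4_colors xt assms distinct unfolding C4_at_most_2_colored_def by fastforce
  have path: "dpath A [y, t, u, w, x] y x"
    using yt assms distinct x_ne_y same_part by (auto simp: dpath_def arcs_of_def)
  have "num_colors col [y, t, u, w, x]
          \<le> card (insert (col (y, t)) (col ` {(x, t), (t, u), (u, w), (w, x)}))"
    unfolding num_colors_def arcs_of_def by (rule card_mono) auto
  also have "\<dots> \<le> 3" using C4 by (simp add: card_insert_if)
  finally show False
    using no_return path num_colors_pos[of "[y, t, u, w, x]" col] by auto
qed

text \<open>Hence there is no x-y path at all: its first vertex that is an in-neighbour of x
  (outside the partite set of x) exists, as the second-to-last vertex qualifies, and its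
  predecessors lead to one of the two situations above.\<close>
lemma no_path_x_y:
  assumes p: "dpath A p x y"
  shows False
proof -
  define n where "n = length p"
  define good where "good i \<longleftrightarrow> part (p!i) \<noteq> part x \<and> (p!i, x) \<in> A" for i
  have first: "p!0 = x" and final: "p!(n - 1) = y"
    using p by (auto simp: dpath_def hd_conv_nth last_conv_nth n_def)
  have "n \<noteq> 0" using p by (simp add: dpath_def n_def)
  moreover have "n \<noteq> 1" using first final x_ne_y by auto
  ultimately have n2: "2 \<le> n" by simp
  have arc: "\<And>i. Suc i < n \<Longrightarrow> (p!i, p!Suc i) \<in> A"
    using dpath_arc[OF p] by (simp add: n_def)
  have in_V: "\<And>i. Suc i < n \<Longrightarrow> p!i \<in> V \<and> p!Suc i \<in> V"
    using arc multipartite by (auto simp: semicomplete_multipartite_def)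
  have "good (n - 2)"
  proof -
    have last_arc: "(p!(n - 2), y) \<in> A"
      using arc[of "n - 2"] n2 final by (simp add: Suc_diff_Suc numeral_2_eq_2)
    hence "part (p!(n - 2)) \<noteq> part x" using arc_parts same_part by simp
    thus ?thesis
      using out_neighbour[of "p!(n - 2)"] in_V[of "n - 2"] n2 last_arc no_2path_x_y
      unfolding good_def by fastforce
  qed
  moreover have "\<not> good 0" using first by (simp add: good_def)
  ultimately obtain k where k: "k < n - 2" "\<forall>i\<le>k. \<not> good i" "good (Suc k)"
    using ex_least_nat_less[of good "n - 2"] by blast
  have uw: "(p!k, p!Suc k) \<in> A" using arc k(1) by simp
  have w: "p!Suc k \<in> V" "(p!Suc k, x) \<in> A" "part (p!Suc k) \<noteq> part x"
    using in_V[of k] k(1,3) by (auto simp: good_def)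
  show False
  proof (cases "part (p!k) = part x")
    case False
    thus False
      using no_return_via_3[OF uw w(2)] in_V[of k] k w(3) by (auto simp: good_def)
  next
    case True
    have "(x, p!Suc k) \<notin> A" using in_neighbour w by blast
    hence "k \<noteq> 0" using uw first by metis
    then obtain j where j: "k = Suc j" using not0_implies_Suc by blast
    have tu: "(p!j, p!k) \<in> A" using arc[of j] j k(1) by simp
    have t: "p!j \<in> V" "part (p!j) \<noteq> part x"
      using arc_parts[OF tu] True in_V[of j] j k(1) by auto
    have "\<not> good j" using k(2) j by simp
    hence "(p!j, x) \<notin> A" using t(2) by (simp add: good_def)
    thus False by (rule no_return_via_4[OF tu uw w(2) t(1) w(1) t(2) _ w(3)])
  qed
qed

end

theorem mainTheorem3:
  fixes V :: "'a set" and A :: "('a \<times> 'a) set" and r m :: nat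
    and part :: "'a \<Rightarrow> nat" and col :: "'a \<times> 'a \<Rightarrow> nat" and x y :: 'a
  assumes "r \<ge> 3"
    and "semicomplete_multipartite V A r part"
    and "m_colored A m col"
    and "C4_at_most_2_colored A col"
    and "x \<in> V" and "y \<in> V" and "x \<noteq> y"
    and "\<exists>p. dpath A p x y \<and> num_colors col p = 3"
    and "\<not> (\<exists>q. dpath A q y x \<and> 1 \<le> num_colors col q \<and> num_colors col q \<le> 3)"
  shows "ddist A x y \<le> 2"
proof -
  interpret no_cheap_return V A r part col x y
    using assms by unfold_locales
  obtain p where p: "dpath A p x y" using assms(8) by blast
  consider z where "(x, z) \<in> A" "(z, y) \<in> A" | "part x \<noteq> part y" "\<nexists>z. (x, z) \<in> A \<and> (z, y) \<in> A"
    | "part x = part y" "\<nexists>z. (x, z) \<in> A \<and> (z, y) \<in> A"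
    by blast
  then show ?thesis
  proof cases
    case (1 z)
    hence "dpath A [x, z, y] x y" using arc_parts x_ne_y by (auto simp: dpath_def arcs_of_def)
    thus ?thesis using ddist_le_path by fastforce
  next
    case 2
    hence "(x, y) \<in> A" using arc_exists[OF x_in y_in] no_arc_y_x by blast
    hence "dpath A [x, y] x y" using x_ne_y by (simp add: dpath_def arcs_of_def)
    thus ?thesis using ddist_le_path by fastforce
  next
    case 3
    interpret same_part_no_2path V A r part col x y
      using 3 by unfold_locales
    show ?thesis using no_path_x_y[OF p] ..
  qed
qed

end
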